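(* Let $(U,V)$ be a pair of random variables taking values in finite sets $\mathcal{U}\times\mathcal{V}$ with joint probability mass function $p(u,v)$ and marginals $p(u),p(v)$. Let $\mathcal{U}_1,\dots,\mathcal{U}_{\tilde N_u}$ be a partition of $\mathcal{U}$ into nonempty pairwise disjoint blocks and $\mathcal{V}_1,\dots,\mathcal{V}_{\tilde N_v}$ a partition of $\mathcal{V}$ into nonempty pairwise disjoint blocks (the synonymous mappings), with associated semantic variables $\tilde U,\tilde V$. Then (chain rule of mutual information) $$I_s(\tilde U;\tilde V)\le H_s(\tilde V)-H(V\mid U)\le I(U;V)\le H(V)-H_s(\tilde V\mid U)\le I^s(\tilde U;\tilde V),$$ where $I(U;V)$ is the Shannon mutual information and $H(V)$, $H(V\mid U)$ are Shannon entropies.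
   Context: Write $p(\mathcal{U}_{i_s})=\sum_{u\in\mathcal{U}_{i_s}}p(u)$, $p(\mathcal{V}_{j_s})=\sum_{v\in\mathcal{V}_{j_s}}p(v)$, $p(\mathcal{U}_{i_s}\times\mathcal{V}_{j_s})=\sum_{(u,v)\in\mathcal{U}_{i_s}\times\mathcal{V}_{j_s}}p(u,v)$. Semantic entropies: $H_s(\tilde U)=-\sum_{i_s}p(\mathcal{U}_{i_s})\log p(\mathcal{U}_{i_s})$, $H_s(\tilde V)=-\sum_{j_s}p(\mathcal{V}_{j_s})\log p(\mathcal{V}_{j_s})$, $H_s(\tilde U,\tilde V)=-\sum_{i_s,j_s}p(\mathcal{U}_{i_s}\times\mathcal{V}_{j_s})\log p(\mathcal{U}_{i_s}\times\mathcal{V}_{j_s})$. Semantic conditional entropy: $H_s(\tilde V\mid U)=-\sum_{u:p(u)>0}\sum_{j_s}p(u)\,p(\mathcal{V}_{j_s}\mid u)\log p(\mathcal{V}_{j_s}\mid u)$ with $p(\mathcal{V}_{j_s}\mid u)=\sum_{v\in\mathcal{V}_{j_s}}p(v\mid u)$. Up semantic mutual information: $I^s(\tilde U;\tilde V)=H(U)+H(V)-H_s(\tilde U,\tilde V)$. Down semantic mutual information: $I_s(\tilde U;\tilde V)=H_s(\tilde U)+H_s(\tilde V)-H(U,V)$ (which may be negative). Logarithms are to base 2 and $0\log 0=0$. *)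

theory Defs
  imports "HOL-Analysis.Analysis" "HOL-Library.Disjoint_Sets"
begin

text \<open>Finite joint pmf p u v on UU x VV (base-2 logs; note log 2 0 = 0 in Isabelle,
so the convention 0 log 0 = 0 holds automatically).\<close>

definition is_joint_pmf :: "'a set \<Rightarrow> 'b set \<Rightarrow> ('a \<Rightarrow> 'b \<Rightarrow> real) \<Rightarrow> bool" where
  "is_joint_pmf UU VV p \<longleftrightarrow> finite UU \<and> finite VV \<and>
     (\<forall>u\<in>UU. \<forall>v\<in>VV. 0 \<le> p u v) \<and> (\<Sum>u\<in>UU. \<Sum>v\<in>VV. p u v) = 1"

definition margU :: "'b set \<Rightarrow> ('a \<Rightarrow> 'b \<Rightarrow> real) \<Rightarrow> 'a \<Rightarrow> real" where
  "margU VV p u = (\<Sum>v\<in>VV. p u v)"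

definition margV :: "'a set \<Rightarrow> ('a \<Rightarrow> 'b \<Rightarrow> real) \<Rightarrow> 'b \<Rightarrow> real" where
  "margV UU p v = (\<Sum>u\<in>UU. p u v)"

definition entU :: "'a set \<Rightarrow> 'b set \<Rightarrow> ('a \<Rightarrow> 'b \<Rightarrow> real) \<Rightarrow> real" where
  "entU UU VV p = - (\<Sum>u\<in>UU. margU VV p u * log 2 (margU VV p u))"

definition entV :: "'a set \<Rightarrow> 'b set \<Rightarrow> ('a \<Rightarrow> 'b \<Rightarrow> real) \<Rightarrow> real" where
  "entV UU VV p = - (\<Sum>v\<in>VV. margV UU p v * log 2 (margV UU p v))"

definition entUV :: "'a set \<Rightarrow> 'b set \<Rightarrow> ('a \<Rightarrow> 'b \<Rightarrow> real) \<Rightarrow> real" where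
  "entUV UU VV p = - (\<Sum>u\<in>UU. \<Sum>v\<in>VV. p u v * log 2 (p u v))"

definition condentVU :: "'a set \<Rightarrow> 'b set \<Rightarrow> ('a \<Rightarrow> 'b \<Rightarrow> real) \<Rightarrow> real" where
  "condentVU UU VV p = - (\<Sum>u\<in>{u\<in>UU. margU VV p u > 0}. \<Sum>v\<in>VV.
      p u v * log 2 (p u v / margU VV p u))"

definition mutinf :: "'a set \<Rightarrow> 'b set \<Rightarrow> ('a \<Rightarrow> 'b \<Rightarrow> real) \<Rightarrow> real" where
  "mutinf UU VV p = entU UU VV p + entV UU VV p - entUV UU VV p"

definition sem_entU :: "'a set set \<Rightarrow> 'b set \<Rightarrow> ('a \<Rightarrow> 'b \<Rightarrow> real) \<Rightarrow> real" where
  "sem_entU PU VV p = - (\<Sum>B\<in>PU. (\<Sum>u\<in>B. margU VV p u) * log 2 (\<Sum>u\<in>B. margU VV p u))"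

definition sem_entV :: "'a set \<Rightarrow> 'b set set \<Rightarrow> ('a \<Rightarrow> 'b \<Rightarrow> real) \<Rightarrow> real" where
  "sem_entV UU PV p = - (\<Sum>C\<in>PV. (\<Sum>v\<in>C. margV UU p v) * log 2 (\<Sum>v\<in>C. margV UU p v))"

definition sem_entUV :: "'a set set \<Rightarrow> 'b set set \<Rightarrow> ('a \<Rightarrow> 'b \<Rightarrow> real) \<Rightarrow> real" where
  "sem_entUV PU PV p = - (\<Sum>(B, C)\<in>PU \<times> PV.
      (\<Sum>(u, v)\<in>B \<times> C. p u v) * log 2 (\<Sum>(u, v)\<in>B \<times> C. p u v))"

definition sem_condentVU :: "'a set \<Rightarrow> 'b set \<Rightarrow> 'b set set \<Rightarrow> ('a \<Rightarrow> 'b \<Rightarrow> real) \<Rightarrow> real" where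
  "sem_condentVU UU VV PV p = - (\<Sum>u\<in>{u\<in>UU. margU VV p u > 0}. \<Sum>C\<in>PV.
      margU VV p u * ((\<Sum>v\<in>C. p u v) / margU VV p u)
        * log 2 ((\<Sum>v\<in>C. p u v) / margU VV p u))"

definition up_sem_mi :: "'a set \<Rightarrow> 'b set \<Rightarrow> 'a set set \<Rightarrow> 'b set set \<Rightarrow> ('a \<Rightarrow> 'b \<Rightarrow> real) \<Rightarrow> real" where
  "up_sem_mi UU VV PU PV p = entU UU VV p + entV UU VV p - sem_entUV PU PV p"

definition down_sem_mi :: "'a set \<Rightarrow> 'b set \<Rightarrow> 'a set set \<Rightarrow> 'b set set \<Rightarrow> ('a \<Rightarrow> 'b \<Rightarrow> real) \<Rightarrow> real" where
  "down_sem_mi UU VV PU PV p = sem_entU PU VV p + sem_entV UU PV p - entUV UU VV p"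

end

theory Submission
  imports Defs
begin

text \<open>Two facts about entropy suffice: the chain rule \<open>H(U,V) = H(U) + H(V|U)\<close>, and that
  merging outcomes along a partition never increases entropy, because \<open>x log x\<close> is superadditive
  on nonnegative numbers. Merging gives \<open>H\<^sub>s(U~) \<le> H(U)\<close>, \<open>H\<^sub>s(V~) \<le> H(V)\<close> and, for every
  conditional distribution of \<open>V\<close> given \<open>u\<close>, \<open>H\<^sub>s(V~|U) \<le> H(V|U)\<close>. Finally the chain rule for
  the pair \<open>(U, V~)\<close> reads \<open>H(U,V~) = H(U) + H\<^sub>s(V~|U)\<close>, and merging \<open>U\<close> inside this pair gives
  \<open>H\<^sub>s(U~,V~) \<le> H(U) + H\<^sub>s(V~|U)\<close>.\<close>

lemma sum_mult_log_le_mult_log_sum: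
  fixes f :: "'c \<Rightarrow> real"
  assumes "1 < b" and "finite B" and nonneg: "\<And>a. a \<in> B \<Longrightarrow> 0 \<le> f a"
  shows "(\<Sum>a\<in>B. f a * log b (f a)) \<le> (\<Sum>a\<in>B. f a) * log b (\<Sum>a\<in>B. f a)"
proof -
  have "f a * log b (f a) \<le> f a * log b (\<Sum>a\<in>B. f a)" if "a \<in> B" for a
  proof (cases "f a = 0")
    case False
    have "f a \<le> (\<Sum>a\<in>B. f a)"
      using \<open>a \<in> B\<close> \<open>finite B\<close> nonneg by (intro member_le_sum) auto
    with False nonneg[OF \<open>a \<in> B\<close>] \<open>1 < b\<close> show ?thesis
      by (intro mult_left_mono log_mono) auto
  qed simp
  then have "(\<Sum>a\<in>B. f a * log b (f a)) \<le> (\<Sum>a\<in>B. f a * log b (\<Sum>a\<in>B. f a))"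
    by (rule sum_mono)
  then show ?thesis
    by (simp add: sum_distrib_right)
qed

lemma sum_mult_log_le_partition:
  fixes f :: "'c \<Rightarrow> real"
  assumes "1 < b" and "finite A" and P: "partition_on A P"
    and nonneg: "\<And>a. a \<in> A \<Longrightarrow> 0 \<le> f a"
  shows "(\<Sum>a\<in>A. f a * log b (f a)) \<le> (\<Sum>B\<in>P. (\<Sum>a\<in>B. f a) * log b (\<Sum>a\<in>B. f a))"
proof -
  have "(\<Sum>a\<in>A. f a * log b (f a)) = (\<Sum>B\<in>P. \<Sum>a\<in>B. f a * log b (f a))"
    using sum.partition[OF \<open>finite A\<close> P] .
  also have "\<dots> \<le> (\<Sum>B\<in>P. (\<Sum>a\<in>B. f a) * log b (\<Sum>a\<in>B. f a))"
  proof (rule sum_mono)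
    fix B assume "B \<in> P"
    then have "B \<subseteq> A"
      using P by (auto simp: partition_on_def)
    with \<open>finite A\<close> nonneg show "(\<Sum>a\<in>B. f a * log b (f a)) \<le> (\<Sum>a\<in>B. f a) * log b (\<Sum>a\<in>B. f a)"
      by (intro sum_mult_log_le_mult_log_sum \<open>1 < b\<close>) (auto intro: finite_subset)
  qed
  finally show ?thesis .
qed

lemma sum_mult_log_divide_sum:
  fixes g :: "'c \<Rightarrow> real"
  assumes "(\<Sum>i\<in>I. g i) \<noteq> 0"
  shows "(\<Sum>i\<in>I. g i * log b (g i / (\<Sum>i\<in>I. g i)))
       = (\<Sum>i\<in>I. g i * log b (g i)) - (\<Sum>i\<in>I. g i) * log b (\<Sum>i\<in>I. g i)"
proof -
  have "g i * log b (g i / (\<Sum>i\<in>I. g i)) = g i * log b (g i) - g i * log b (\<Sum>i\<in>I. g i)" for i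
    using assms by (simp add: log_divide right_diff_distrib)
  then show ?thesis
    by (simp add: sum_subtractf sum_distrib_right)
qed

lemma sum_sum_mult_log_chain:
  fixes g :: "'a \<Rightarrow> 'c \<Rightarrow> real"
  assumes "finite U" and "finite I" and nonneg: "\<And>u i. u \<in> U \<Longrightarrow> i \<in> I \<Longrightarrow> 0 \<le> g u i"
  shows "(\<Sum>u\<in>U. \<Sum>i\<in>I. g u i * log b (g u i)) =
     (\<Sum>u\<in>U. (\<Sum>i\<in>I. g u i) * log b (\<Sum>i\<in>I. g u i)) +
     (\<Sum>u\<in>{u\<in>U. 0 < (\<Sum>i\<in>I. g u i)}. \<Sum>i\<in>I. g u i * log b (g u i / (\<Sum>i\<in>I. g u i)))"
proof -
  have row: "(\<Sum>i\<in>I. g u i * log b (g u i)) = (\<Sum>i\<in>I. g u i) * log b (\<Sum>i\<in>I. g u i) +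
      (if 0 < (\<Sum>i\<in>I. g u i) then \<Sum>i\<in>I. g u i * log b (g u i / (\<Sum>i\<in>I. g u i)) else 0)"
    if "u \<in> U" for u
  proof (cases "0 < (\<Sum>i\<in>I. g u i)")
    case True
    then show ?thesis
      by (simp add: sum_mult_log_divide_sum)
  next
    case False
    with \<open>u \<in> U\<close> nonneg have "(\<Sum>i\<in>I. g u i) = 0"
      by (simp add: order.antisym sum_nonneg)
    with \<open>u \<in> U\<close> \<open>finite I\<close> nonneg have "\<forall>i\<in>I. g u i = 0"
      by (simp add: sum_nonneg_eq_0_iff)
    then show ?thesis
      by simp
  qed
  show ?thesis
    by (simp add: sum.cong[OF refl row] sum.distrib sum.inter_filter[OF \<open>finite U\<close>])
qed

lemma entUV_eq_entU_plus_condentVU: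
  assumes "is_joint_pmf UU VV p"
  shows "entUV UU VV p = entU UU VV p + condentVU UU VV p"
  using assms sum_sum_mult_log_chain[of UU VV p 2]
  by (simp add: is_joint_pmf_def entUV_def entU_def condentVU_def margU_def)

lemma sem_entU_le_entU:
  assumes "is_joint_pmf UU VV p" and "partition_on UU PU"
  shows "sem_entU PU VV p \<le> entU UU VV p"
  using assms sum_mult_log_le_partition[of 2 UU PU "margU VV p"]
  by (simp add: is_joint_pmf_def sem_entU_def entU_def margU_def sum_nonneg)

lemma sem_entV_le_entV:
  assumes "is_joint_pmf UU VV p" and "partition_on VV PV"
  shows "sem_entV UU PV p \<le> entV UU VV p"
  using assms sum_mult_log_le_partition[of 2 VV PV "margV UU p"]
  by (simp add: is_joint_pmf_def sem_entV_def entV_def margV_def sum_nonneg)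

lemma sem_condentVU_eq:
  "sem_condentVU UU VV PV p = - (\<Sum>u\<in>{u\<in>UU. 0 < margU VV p u}. \<Sum>C\<in>PV.
      (\<Sum>v\<in>C. p u v) * log 2 ((\<Sum>v\<in>C. p u v) / margU VV p u))"
  unfolding sem_condentVU_def by (intro arg_cong[where f = uminus] sum.cong refl) auto

lemma margU_eq_sum_blocks:
  assumes "finite VV" and "partition_on VV PV"
  shows "margU VV p u = (\<Sum>C\<in>PV. \<Sum>v\<in>C. p u v)"
  unfolding margU_def using sum.partition[OF assms] .

lemma sem_condentVU_le_condentVU:
  assumes pmf: "is_joint_pmf UU VV p" and PV: "partition_on VV PV"
  shows "sem_condentVU UU VV PV p \<le> condentVU UU VV p"
proof -
  have "finite VV" and nonneg: "\<And>u v. u \<in> UU \<Longrightarrow> v \<in> VV \<Longrightarrow> 0 \<le> p u v"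
    using pmf by (auto simp: is_joint_pmf_def)
  have "(\<Sum>v\<in>VV. p u v * log 2 (p u v / margU VV p u))
      \<le> (\<Sum>C\<in>PV. (\<Sum>v\<in>C. p u v) * log 2 ((\<Sum>v\<in>C. p u v) / margU VV p u))"
    if "u \<in> UU" and "0 < margU VV p u" for u
  proof -
    have sum_VV: "(\<Sum>v\<in>VV. p u v) = margU VV p u"
      by (simp add: margU_def)
    have sum_PV: "(\<Sum>C\<in>PV. \<Sum>v\<in>C. p u v) = margU VV p u"
      by (rule margU_eq_sum_blocks[OF \<open>finite VV\<close> PV, symmetric])
    have "(\<Sum>v\<in>VV. p u v * log 2 (p u v / margU VV p u))
        = (\<Sum>v\<in>VV. p u v * log 2 (p u v)) - margU VV p u * log 2 (margU VV p u)"
      using sum_mult_log_divide_sum[of "p u" VV 2] \<open>0 < margU VV p u\<close> by (simp add: sum_VV)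
    also have "\<dots> \<le> (\<Sum>C\<in>PV. (\<Sum>v\<in>C. p u v) * log 2 (\<Sum>v\<in>C. p u v))
        - margU VV p u * log 2 (margU VV p u)"
      using \<open>finite VV\<close> PV nonneg \<open>u \<in> UU\<close> by (simp add: sum_mult_log_le_partition)
    also have "\<dots> = (\<Sum>C\<in>PV. (\<Sum>v\<in>C. p u v) * log 2 ((\<Sum>v\<in>C. p u v) / margU VV p u))"
      using sum_mult_log_divide_sum[of "\<lambda>C. \<Sum>v\<in>C. p u v" PV 2] \<open>0 < margU VV p u\<close>
      by (simp add: sum_PV)
    finally show ?thesis .
  qed
  then show ?thesis
    unfolding sem_condentVU_eq condentVU_def neg_le_iff_le by (intro sum_mono) auto
qed

lemma sem_entUV_le_entU_plus_sem_condentVU: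
  assumes pmf: "is_joint_pmf UU VV p" and PU: "partition_on UU PU" and PV: "partition_on VV PV"
  shows "sem_entUV PU PV p \<le> entU UU VV p + sem_condentVU UU VV PV p"
proof -
  have "finite UU" and "finite VV" and nonneg: "\<And>u v. u \<in> UU \<Longrightarrow> v \<in> VV \<Longrightarrow> 0 \<le> p u v"
    using pmf by (auto simp: is_joint_pmf_def)
  define q where "q u C = (\<Sum>v\<in>C. p u v)" for u C
  have q_nonneg: "0 \<le> q u C" if "u \<in> UU" and "C \<in> PV" for u C
    using that PV nonneg unfolding q_def partition_on_def by (force intro: sum_nonneg)
  have margU_q: "margU VV p u = (\<Sum>C\<in>PV. q u C)" for u
    unfolding q_def using \<open>finite VV\<close> PV by (rule margU_eq_sum_blocks)
  have joint_U_semV: "(\<Sum>u\<in>UU. \<Sum>C\<in>PV. q u C * log 2 (q u C))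
      = - entU UU VV p - sem_condentVU UU VV PV p"
    using sum_sum_mult_log_chain[of UU PV q 2] \<open>finite UU\<close> finite_elements[OF \<open>finite VV\<close> PV] q_nonneg
    unfolding entU_def sem_condentVU_eq margU_q by (simp add: q_def)
  have sem_entUV_q: "sem_entUV PU PV p
      = - (\<Sum>C\<in>PV. \<Sum>B\<in>PU. (\<Sum>u\<in>B. q u C) * log 2 (\<Sum>u\<in>B. q u C))"
    unfolding sem_entUV_def q_def
    by (simp add: sum.cartesian_product[symmetric] sum.swap[of _ PV PU])
  have "(\<Sum>C\<in>PV. \<Sum>u\<in>UU. q u C * log 2 (q u C))
      \<le> (\<Sum>C\<in>PV. \<Sum>B\<in>PU. (\<Sum>u\<in>B. q u C) * log 2 (\<Sum>u\<in>B. q u C))"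
    using \<open>finite UU\<close> PU q_nonneg by (intro sum_mono sum_mult_log_le_partition) auto
  then show ?thesis
    using joint_U_semV sem_entUV_q by (simp add: sum.swap[of _ PV UU])
qed

theorem theorem2:
  fixes UU :: "'a set" and VV :: "'b set" and p :: "'a \<Rightarrow> 'b \<Rightarrow> real"
    and PU :: "'a set set" and PV :: "'b set set"
  assumes "is_joint_pmf UU VV p"
    and "partition_on UU PU" and "partition_on VV PV"
  shows "down_sem_mi UU VV PU PV p \<le> sem_entV UU PV p - condentVU UU VV p
       \<and> sem_entV UU PV p - condentVU UU VV p \<le> mutinf UU VV p
       \<and> mutinf UU VV p \<le> entV UU VV p - sem_condentVU UU VV PV p
       \<and> entV UU VV p - sem_condentVU UU VV PV p \<le> up_sem_mi UU VV PU PV p"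
  using entUV_eq_entU_plus_condentVU[OF assms(1)]
    sem_entU_le_entU[OF assms(1,2)] sem_entV_le_entV[OF assms(1,3)]
    sem_condentVU_le_condentVU[OF assms(1,3)] sem_entUV_le_entU_plus_sem_condentVU[OF assms]
  unfolding down_sem_mi_def mutinf_def up_sem_mi_def by linarith

end
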